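(* Let $D_1\subset\mathbb{R}^2$ be an open disc centered at the origin, let $\boldsymbol{\gamma}_1,\dots,\boldsymbol{\gamma}_m$ be distinct unit vectors in $\mathbb{R}^2$ with $m$ odd, and $c_1,\dots,c_m$ nonzero reals. Then the vector-valued star transform $\mathcal{S}$ is invertible, i.e. every vector field $\mathbf{f}$ on $\mathbb{R}^2$ with components in $C^2_c(D_1)$ is uniquely determined by $\mathcal{S}\mathbf{f}$.
   Context: For $\mathbf{x}=(x_1,x_2)$ set $\mathbf{x}^\perp=(-x_2,x_1)$. For a unit vector $\boldsymbol{\gamma}$, $\mathcal{X}_{\boldsymbol{\gamma}}h(\mathbf{x})=\int_0^\infty h(\mathbf{x}+t\boldsymbol{\gamma})\,dt$. The vector-valued star transform is $\mathcal{S}\mathbf{f}=\sum_{i=1}^m c_i\,\mathcal{X}_{\boldsymbol{\gamma}_i}\begin{bmatrix}\mathbf{f}\cdot\boldsymbol{\gamma}_i\\ \mathbf{f}\cdot\boldsymbol{\gamma}_i^\perp\end{bmatrix}$. *)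

theory Defs
  imports "HOL-Analysis.Analysis"
begin

definition perp :: "real^2 \<Rightarrow> real^2" where
  "perp x = vector [- (x $ 2), x $ 1]"

definition ray_transform :: "real^2 \<Rightarrow> (real^2 \<Rightarrow> real) \<Rightarrow> real^2 \<Rightarrow> real" where
  "ray_transform gam h x = integral {0..} (\<lambda>t::real. h (x + t *\<^sub>R gam))"

definition star_transform ::
  "nat \<Rightarrow> (nat \<Rightarrow> real) \<Rightarrow> (nat \<Rightarrow> real^2) \<Rightarrow> (real^2 \<Rightarrow> real^2) \<Rightarrow> real^2 \<Rightarrow> real^2" where
  "star_transform m c gam f x =
     (\<Sum>i<m. c i *\<^sub>R vector [ray_transform (gam i) (\<lambda>y. f y \<bullet> gam i) x,
                               ray_transform (gam i) (\<lambda>y. f y \<bullet> perp (gam i)) x])"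

definition C2 :: "(real^2 \<Rightarrow> real) \<Rightarrow> bool" where
  "C2 h \<longleftrightarrow> (\<exists>(D1 :: real^2 \<Rightarrow> ((real^2) \<Rightarrow>\<^sub>L real))
                  (D2 :: real^2 \<Rightarrow> ((real^2) \<Rightarrow>\<^sub>L ((real^2) \<Rightarrow>\<^sub>L real))).
      (\<forall>x. (h has_derivative blinfun_apply (D1 x)) (at x)) \<and>
      (\<forall>x. (D1 has_derivative blinfun_apply (D2 x)) (at x)) \<and>
      continuous_on UNIV D2)"

definition C2c :: "(real^2) set \<Rightarrow> (real^2 \<Rightarrow> real) \<Rightarrow> bool" where
  "C2c U h \<longleftrightarrow> C2 h \<and> compact (closure {x. h x \<noteq> 0}) \<and> closure {x. h x \<noteq> 0} \<subseteq> U"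

end

theory Submission
  imports Defs
begin

text \<open>
  Put \<open>H = f - g\<close>, read as a function of two real coordinates; it is continuous, vanishes
  outside the square \<open>[-r, r]\<^sup>2\<close>, and its star transform vanishes.  Fix a slope \<open>u\<close> for which
  no direction \<open>\<gamma>\<^sub>i\<close> is parallel to the lines \<open>y = u x + \<tau>\<close>, and integrate the vanishing
  star transform along such a line.  Every ray transform turns into an integral of \<open>H\<close> over a
  half plane bounded by a parallel line, i.e. into a primitive in \<open>\<tau>\<close> of the line integrals
  \<open>\<Phi>(\<tau>) = \<integral> H(x, u x + \<tau>) dx\<close>.  The two components of the star transform then say
  that this primitive is orthogonal to \<open>V(u) = \<Sum>\<^sub>i c\<^sub>i \<gamma>\<^sub>i / (\<gamma>\<^sub>i\<^sub>2 - u \<gamma>\<^sub>i\<^sub>1)\<close> and to its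
  rotation by a right angle, so \<open>\<Phi> = 0\<close> whenever \<open>V(u) \<noteq> 0\<close>.

  Distinct unit vectors fall into classes \<open>{\<gamma>, -\<gamma>}\<close> of size at most two, so for odd \<open>m\<close> and
  nonzero weights some class has a nonzero weight sum.  As \<open>u\<close> approaches the slope of that
  class (or tends to infinity, for the vertical class), \<open>V(u)\<close> is governed by this sum, so
  \<open>\<Phi>\<close> vanishes for infinitely many slopes.  Then all moments of \<open>H\<close> on the square vanish,
  since \<open>\<integral>\<integral> (y - u x)\<^sup>k H\<close> is a polynomial in \<open>u\<close> with infinitely many roots, and the
  Stone--Weierstrass theorem gives \<open>\<integral>\<integral> H\<^sup>2 = 0\<close>.
\<close>

section \<open>Functions on a square with vanishing moments\<close>

abbreviation centered_square :: "real \<Rightarrow> (real \<times> real) set" where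
  "centered_square r \<equiv> cbox (-r, -r) (r, r)"

definition moments_vanish :: "real \<Rightarrow> (real \<times> real \<Rightarrow> real) \<Rightarrow> bool" where
  "moments_vanish r F \<longleftrightarrow>
     (\<forall>a b. integral (centered_square r) (\<lambda>(s, y). s ^ a * y ^ b * F (s, y)) = 0)"

lemma integrable_moment:
  fixes F :: "real \<times> real \<Rightarrow> real"
  assumes "continuous_on UNIV F"
  shows "(\<lambda>(s, y). s ^ a * y ^ b * F (s, y)) integrable_on cbox c d"
proof (rule integrable_continuous)
  show "continuous_on (cbox c d) (\<lambda>(s, y). s ^ a * y ^ b * F (s, y))"
    using continuous_on_subset[OF assms subset_UNIV]
    by (auto simp: split_beta intro!: continuous_intros)
qed

lemma continuous_on_real_polynomial_function:
  "real_polynomial_function p \<Longrightarrow> continuous_on S p"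
  by (simp add: continuous_at_imp_continuous_on continuous_real_polymonial_function)

lemma bounded_linear_on_pair:
  fixes p :: "real \<times> real \<Rightarrow> real"
  assumes "bounded_linear p"
  shows "p (s, y) = s * p (1, 0) + y * p (0, 1)"
proof -
  interpret bounded_linear p by fact
  have "p (s, y) = p (s *\<^sub>R (1, 0) + y *\<^sub>R (0, 1))" by simp
  then show ?thesis by (simp only: add scale) simp
qed

lemma integral_linear_combination:
  fixes f g :: "'a::euclidean_space \<Rightarrow> real"
  assumes "f integrable_on S" "g integrable_on S"
  shows "integral S (\<lambda>x. a * f x + b * g x) = a * integral S f + b * integral S g"
  using assms by (simp add: integral_add integrable_on_mult_right)

lemma moments_vanish_mult_polynomial:
  assumes "real_polynomial_function p"
  shows "continuous_on UNIV F \<Longrightarrow> moments_vanish r F \<Longrightarrow> moments_vanish r (\<lambda>x. p x * F x)"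
  using assms
proof (induction p arbitrary: F rule: real_polynomial_function.induct)
  case (linear p)
  show ?case
    unfolding moments_vanish_def
  proof (intro allI)
    fix a b
    let ?m = "\<lambda>a b. \<lambda>(s, y). s ^ a * y ^ b * F (s, y)"
    have "integral (centered_square r) (\<lambda>(s, y). s ^ a * y ^ b * (p (s, y) * F (s, y))) =
        integral (centered_square r) (\<lambda>x. p (1, 0) * ?m (Suc a) b x + p (0, 1) * ?m a (Suc b) x)"
      by (rule integral_cong, clarify, subst bounded_linear_on_pair[OF linear.hyps])
        (simp add: algebra_simps)
    also have "\<dots> = p (1, 0) * integral (centered_square r) (?m (Suc a) b) +
        p (0, 1) * integral (centered_square r) (?m a (Suc b))"
      by (rule integral_linear_combination; rule integrable_moment[OF linear.prems(1)])
    also have "\<dots> = 0"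
      using linear.prems(2) unfolding moments_vanish_def by (simp del: power_Suc)
    finally show "integral (centered_square r) (\<lambda>(s, y). s ^ a * y ^ b * (p (s, y) * F (s, y))) = 0" .
  qed
next
  case (const c)
  then show ?case
    by (simp add: moments_vanish_def mult.left_commute[of _ c] case_prod_unfold)
next
  case (add p q)
  have "continuous_on UNIV (\<lambda>x. p x * F x)" "continuous_on UNIV (\<lambda>x. q x * F x)"
    using add.hyps add.prems(1) by (metis continuous_on_mult continuous_on_real_polynomial_function)+
  then show ?case
    using add integrable_moment
    by (simp add: moments_vanish_def distrib_left distrib_right integral_add case_prod_unfold)
next
  case (mult p q)
  have "continuous_on UNIV (\<lambda>x. q x * F x)"
    using mult.hyps mult.prems(1) by (metis continuous_on_mult continuous_on_real_polynomial_function)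
  then have "moments_vanish r (\<lambda>x. p x * (q x * F x))"
    using mult by blast
  then show ?case by (simp add: mult.assoc)
qed

lemma integral_polynomial_mult_eq_0:
  assumes "continuous_on UNIV H" "moments_vanish r H" "real_polynomial_function p"
  shows "integral (centered_square r) (\<lambda>x. p x * H x) = 0"
proof -
  have "integral (centered_square r) (\<lambda>(s, y). s ^ 0 * y ^ 0 * (p (s, y) * H (s, y))) = 0"
    using moments_vanish_mult_polynomial[OF assms(3,1,2)] unfolding moments_vanish_def by blast
  then show ?thesis
    by (simp add: case_prod_unfold)
qed

lemma integral_self_mult_eq_0_if_moments_vanish:
  fixes H :: "real \<times> real \<Rightarrow> real"
  assumes H: "continuous_on UNIV H" and "moments_vanish r H"
  shows "integral (centered_square r) (\<lambda>x. H x * H x) = 0"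
proof (rule dense_eq0_I)
  let ?Q = "centered_square r"
  let ?c = "Henstock_Kurzweil_Integration.content ?Q"
  fix e :: real
  assume "e > 0"
  have cQ: "continuous_on ?Q H"
    using H continuous_on_subset by blast
  have int: "f integrable_on ?Q" if "continuous_on UNIV f" for f :: "real \<times> real \<Rightarrow> real"
    using that continuous_on_subset integrable_continuous subset_UNIV by metis
  obtain B where "B > 0" and B: "\<And>x. x \<in> ?Q \<Longrightarrow> \<bar>H x\<bar> \<le> B"
    using compact_imp_bounded[OF compact_continuous_image[OF cQ compact_cbox]]
    unfolding bounded_pos by force
  define d where "d = e / (B * ?c + 1)"
  have "B * ?c \<ge> 0"
    using \<open>B > 0\<close> by simp
  then have "d > 0" and "B * d * ?c \<le> e"
    using \<open>e > 0\<close> by (auto simp: d_def field_simps)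
  obtain p where p: "real_polynomial_function p" "\<And>x. x \<in> ?Q \<Longrightarrow> \<bar>H x - p x\<bar> < d"
    using Stone_Weierstrass_real_polynomial_function[OF compact_cbox cQ \<open>d > 0\<close>] by blast
  have cp: "continuous_on UNIV p"
    using p(1) by (rule continuous_on_real_polynomial_function)
  have "integral ?Q (\<lambda>x. H x * (H x - p x)) = integral ?Q (\<lambda>x. H x * H x - p x * H x)"
    by (simp add: algebra_simps)
  also have "\<dots> = integral ?Q (\<lambda>x. H x * H x) - integral ?Q (\<lambda>x. p x * H x)"
    using H cp by (intro integral_diff int continuous_on_mult)
  finally have eq: "integral ?Q (\<lambda>x. H x * H x) = integral ?Q (\<lambda>x. H x * (H x - p x))"
    using integral_polynomial_mult_eq_0[OF H assms(2) p(1)] by simp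
  have "norm (integral ?Q (\<lambda>x. H x * (H x - p x))) \<le> B * d * ?c"
  proof (rule has_integral_bound)
    show "((\<lambda>x. H x * (H x - p x)) has_integral integral ?Q (\<lambda>x. H x * (H x - p x))) ?Q"
      using H cp by (intro integrable_integral int continuous_on_mult continuous_on_diff)
    show "norm (H x * (H x - p x)) \<le> B * d" if "x \<in> ?Q" for x
      using B[OF that] p(2)[OF that] by (simp add: abs_mult mult_mono)
  qed (use \<open>B > 0\<close> \<open>d > 0\<close> in simp)
  then show "\<bar>integral ?Q (\<lambda>x. H x * H x)\<bar> \<le> e"
    using eq \<open>B * d * ?c \<le> e\<close> by simp
qed

lemma vanishes_on_square_if_moments_vanish:
  fixes H :: "real \<times> real \<Rightarrow> real"
  assumes H: "continuous_on UNIV H" and r: "r > 0" and "moments_vanish r H"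
    and x: "x \<in> centered_square r"
  shows "H x = 0"
proof -
  have cQ: "continuous_on (centered_square r) H"
    using H continuous_on_subset by blast
  have "((\<lambda>x. H x * H x) has_integral integral (centered_square r) (\<lambda>x. H x * H x)) (centered_square r)"
    using H by (intro integrable_integral integrable_continuous continuous_on_mult) (auto intro: cQ)
  then have HH: "((\<lambda>x. H x * H x) has_integral 0) (centered_square r)"
    by (simp add: integral_self_mult_eq_0_if_moments_vanish[OF H assms(3)])
  have box: "box (-r, -r) (r, r) \<noteq> {}"
    using r by (auto simp: box_ne_empty Basis_prod_def)
  have "H x * H x = 0"
    by (rule has_integral_0_cbox_imp_0[OF continuous_on_mult[OF cQ cQ] _ HH box x]) simp
  then show ?thesis
    by simp
qed

section \<open>Line transforms\<close>

definition vanishes_off_square :: "real \<Rightarrow> (real \<times> real \<Rightarrow> 'a::zero) \<Rightarrow> bool" where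
  "vanishes_off_square r H \<longleftrightarrow> (\<forall>s y. r \<le> \<bar>s\<bar> \<or> r \<le> \<bar>y\<bar> \<longrightarrow> H (s, y) = 0)"

text \<open>
  \<open>line_transform r H u \<tau>\<close> integrates \<open>H\<close> over the line \<open>y = u x + \<tau>\<close> against \<open>dx\<close>; cutting
  at \<open>|x| \<le> r\<close> loses nothing when \<open>H\<close> vanishes off the square.
\<close>

definition line_transform ::
  "real \<Rightarrow> (real \<times> real \<Rightarrow> 'a::real_normed_vector) \<Rightarrow> real \<Rightarrow> real \<Rightarrow> 'a" where
  "line_transform r H u \<tau> = integral {-r..r} (\<lambda>s. H (s, u * s + \<tau>))"

lemma continuous_on_compose_pair:
  assumes "continuous_on UNIV H" "continuous_on S f" "continuous_on S g"
  shows "continuous_on S (\<lambda>x. H (f x, g x))"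
  by (rule continuous_on_compose2[OF assms(1) continuous_on_Pair[OF assms(2,3)]]) simp

lemma integral_eq_on_superinterval:
  fixes f :: "real \<Rightarrow> 'a::banach"
  assumes "continuous_on {a..b} f" "{a..b} \<subseteq> {c..d}" "\<And>x. x \<notin> {a..b} \<Longrightarrow> f x = 0"
  shows "integral {c..d} f = integral {a..b} f"
  using has_integral_on_superset[OF integrable_integral[OF integrable_continuous_interval[OF assms(1)]]]
    assms(2,3) by (simp add: integral_unique)

lemma integral_shift_eq_on_support:
  fixes f :: "real \<Rightarrow> 'a::banach"
  assumes "continuous_on UNIV f" "\<And>x. x \<notin> {a..b} \<Longrightarrow> f x = 0" "{a..b} \<subseteq> {c + h..d + h}"
  shows "integral {c..d} (\<lambda>x. f (x + h)) = integral {a..b} f"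
proof -
  have "integral {c..d} (\<lambda>x. f (x + h)) = integral {c + h..d + h} f"
    using integral_shift_real_ivl[of "c + h" h "d + h" f] by simp
  also have "\<dots> = integral {a..b} f"
    by (rule integral_eq_on_superinterval[OF continuous_on_subset[OF assms(1) subset_UNIV] assms(3,2)])
  finally show ?thesis .
qed

lemma line_transform_eq_0_far:
  assumes "vanishes_off_square r H" "r * (1 + \<bar>u\<bar>) \<le> \<bar>\<tau>\<bar>"
  shows "line_transform r H u \<tau> = 0"
proof -
  have "H (s, u * s + \<tau>) = 0" if "s \<in> {-r..r}" for s
  proof -
    have "\<bar>u * s\<bar> \<le> \<bar>u\<bar> * r"
      using that by (auto simp: abs_mult intro!: mult_left_mono)
    then have "r \<le> \<bar>u * s + \<tau>\<bar>"
      using assms(2) by (simp add: algebra_simps)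
    then show ?thesis
      using assms(1) unfolding vanishes_off_square_def by blast
  qed
  then show ?thesis
    unfolding line_transform_def by (intro integral_unique has_integral_is_0)
qed

lemma continuous_on_line_transform:
  fixes H :: "real \<times> real \<Rightarrow> 'a::banach"
  assumes "continuous_on UNIV H"
  shows "continuous_on UNIV (line_transform r H u)"
proof -
  have "continuous_on UNIV (\<lambda>(\<tau>, s). H (s, u * s + \<tau>))"
    unfolding case_prod_unfold
    by (intro continuous_on_compose_pair[OF assms] continuous_intros)
  from integral_continuous_on_param[OF continuous_on_subset[OF this subset_UNIV]]
  show ?thesis
    unfolding line_transform_def[abs_def] by simp
qed

lemma slope_moment_vanishes:
  fixes H :: "real \<times> real \<Rightarrow> real"
  assumes H: "continuous_on UNIV H" "vanishes_off_square r H"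
    and zero: "\<And>\<tau>. line_transform r H u \<tau> = 0"
  shows "integral (centered_square r) (\<lambda>(s, y). (y - u * s) ^ k * H (s, y)) = 0"
proof -
  define K where "K = r * (1 + \<bar>u\<bar>)"
  define F where "F s y = (y - u * s) ^ k * H (s, y)" for s y
  have cF: "continuous_on UNIV (\<lambda>(s, y). F s y)"
    unfolding F_def case_prod_unfold by (intro continuous_intros continuous_on_compose_pair[OF H(1)])
  have "0 = integral {-K..K} (\<lambda>\<tau>. \<tau> ^ k * line_transform r H u \<tau>)"
    using zero by simp
  also have "\<dots> = integral (cbox (-K) K) (\<lambda>\<tau>. integral (cbox (-r) r) (\<lambda>s. F s (u * s + \<tau>)))"
    by (simp add: line_transform_def F_def)
  also have "\<dots> = integral (cbox (-r) r) (\<lambda>s. integral (cbox (-K) K) (\<lambda>\<tau>. F s (\<tau> + u * s)))"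
  proof (subst integral_swap_continuous)
    have "continuous_on UNIV (\<lambda>x. F (snd x) (u * snd x + fst x))"
      using cF by (intro continuous_on_compose_pair[of "\<lambda>(s, y). F s y", simplified] continuous_intros)
    then show "continuous_on (cbox (-K, -r) (K, r)) (\<lambda>(\<tau>, s). F s (u * s + \<tau>))"
      by (simp add: case_prod_unfold) (meson continuous_on_subset subset_UNIV)
  qed (simp add: add.commute)
  also have "\<dots> = integral (cbox (-r) r) (\<lambda>s. integral (cbox (-r) r) (F s))"
  proof (rule integral_cong)
    fix s :: real
    assume "s \<in> cbox (-r) r"
    then have "\<bar>u * s\<bar> \<le> \<bar>u\<bar> * r"
      by (auto simp: abs_mult intro!: mult_left_mono)
    then have "{-r..r} \<subseteq> {-K + u * s..K + u * s}"
      by (auto simp: K_def algebra_simps)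
    moreover have "continuous_on UNIV (F s)"
      using cF by (intro continuous_on_compose_pair[of "\<lambda>(s, y). F s y", simplified] continuous_intros)
    moreover have "F s y = 0" if "y \<notin> {-r..r}" for y
      using that H(2) by (auto simp: F_def vanishes_off_square_def)
    ultimately show "integral (cbox (-K) K) (\<lambda>\<tau>. F s (\<tau> + u * s)) = integral (cbox (-r) r) (F s)"
      using integral_shift_eq_on_support[of "F s" "-r" r "-K" "u * s" K] by simp
  qed
  also have "\<dots> = integral (centered_square r) (\<lambda>(s, y). F s y)"
    using integral_prod_continuous[of "-r" "-r" r r "\<lambda>(s, y). F s y"] cF
    by (simp add: continuous_on_subset)
  finally show ?thesis
    by (simp add: F_def)
qed

lemma slope_moment_expansion:
  fixes H :: "real \<times> real \<Rightarrow> real"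
  assumes H: "continuous_on UNIV H"
  shows "integral (cbox a b) (\<lambda>(s, y). (y - u * s) ^ k * H (s, y)) =
    (\<Sum>j\<le>k. (of_nat (k choose j) * (-1) ^ j *
      integral (cbox a b) (\<lambda>(s, y). s ^ j * y ^ (k - j) * H (s, y))) * u ^ j)"
proof -
  let ?I = "integral (cbox a b)"
  have "(y - u * s) ^ k * H (s, y) =
      (\<Sum>j\<le>k. (of_nat (k choose j) * (-1) ^ j * u ^ j) * (s ^ j * y ^ (k - j) * H (s, y)))" for s y
  proof -
    have "(y - u * s) ^ k = (- u * s + y) ^ k"
      by simp
    also have "\<dots> = (\<Sum>j\<le>k. of_nat (k choose j) * (- u * s) ^ j * y ^ (k - j))"
      by (rule binomial_ring)
    also have "\<dots> = (\<Sum>j\<le>k. (of_nat (k choose j) * (-1) ^ j * u ^ j) * (s ^ j * y ^ (k - j)))"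
      by (rule sum.cong) (simp_all add: power_minus[of "u * s"] power_mult_distrib)
    finally show ?thesis
      by (simp add: sum_distrib_right mult.assoc)
  qed
  then have "?I (\<lambda>(s, y). (y - u * s) ^ k * H (s, y)) =
      ?I (\<lambda>x. \<Sum>j\<le>k. (of_nat (k choose j) * (-1) ^ j * u ^ j) *
        (case x of (s, y) \<Rightarrow> s ^ j * y ^ (k - j) * H (s, y)))"
    by (simp add: case_prod_unfold)
  also have "\<dots> = (\<Sum>j\<le>k. (of_nat (k choose j) * (-1) ^ j * u ^ j) *
      ?I (\<lambda>(s, y). s ^ j * y ^ (k - j) * H (s, y)))"
    by (subst integral_sum) (simp_all add: integrable_on_mult_right integrable_moment[OF H])
  finally show ?thesis
    by (simp add: mult_ac)
qed

lemma moments_vanish_if_slope_moments_vanish: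
  fixes H :: "real \<times> real \<Rightarrow> real"
  assumes H: "continuous_on UNIV H" and M: "infinite M"
    and slope: "\<And>u k. u \<in> M \<Longrightarrow>
      integral (centered_square r) (\<lambda>(s, y). (y - u * s) ^ k * H (s, y)) = 0"
  shows "moments_vanish r H"
  unfolding moments_vanish_def
proof (intro allI)
  fix a b :: nat
  define k where "k = a + b"
  define coeff where "coeff j = of_nat (k choose j) * (-1) ^ j *
    integral (centered_square r) (\<lambda>(s, y). s ^ j * y ^ (k - j) * H (s, y))" for j
  have "M \<subseteq> {u. (\<Sum>j\<le>k. coeff j * u ^ j) = 0}"
    using slope by (auto simp: coeff_def simp flip: slope_moment_expansion[OF H])
  then have "infinite {u. (\<Sum>j\<le>k. coeff j * u ^ j) = 0}"
    using M finite_subset by blast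
  then have "coeff a = 0"
    using polyfun_roots_finite[of coeff a k] by (force simp: k_def)
  then show "integral (centered_square r) (\<lambda>(s, y). s ^ a * y ^ b * H (s, y)) = 0"
    by (simp add: coeff_def k_def)
qed

theorem eq_0_if_line_transforms_vanish:
  fixes H :: "real \<times> real \<Rightarrow> 'a::euclidean_space"
  assumes H: "continuous_on UNIV H" "vanishes_off_square r H" and r: "r > 0" and M: "infinite M"
    and zero: "\<And>u \<tau>. u \<in> M \<Longrightarrow> line_transform r H u \<tau> = 0"
  shows "H x = 0"
proof (rule euclidean_eqI)
  fix e :: 'a
  assume "e \<in> Basis"
  define G where "G p = H p \<bullet> e" for p
  have cG: "continuous_on UNIV G"
    unfolding G_def using H(1) by (intro continuous_intros)
  have sG: "vanishes_off_square r G"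
    using H(2) by (simp add: vanishes_off_square_def G_def)
  have "line_transform r G u \<tau> = line_transform r H u \<tau> \<bullet> e" for u \<tau>
  proof -
    have "continuous_on {-r..r} (\<lambda>s. H (s, u * s + \<tau>))"
      by (intro continuous_on_compose_pair[OF H(1)] continuous_intros)
    then show ?thesis
      unfolding line_transform_def G_def by (simp add: integrable_continuous_interval)
  qed
  then have "moments_vanish r G"
    using zero by (intro moments_vanish_if_slope_moments_vanish[OF cG M]
        slope_moment_vanishes[OF cG sG]) simp
  then have "G p = 0" if "p \<in> centered_square r" for p
    using vanishes_on_square_if_moments_vanish[OF cG r _ that] by blast
  moreover have "G p = 0" if "p \<notin> centered_square r" for p
    using that sG by (cases p) (auto simp: vanishes_off_square_def cbox_Pair_eq)
  ultimately show "H x \<bullet> e = 0 \<bullet> e"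
    unfolding G_def by (cases "x \<in> centered_square r") auto
qed

section \<open>Integrating ray transforms across a line\<close>

lemma integral_affine_substitution:
  fixes \<Phi> :: "real \<Rightarrow> 'a::euclidean_space"
  assumes \<Phi>: "continuous_on UNIV \<Phi>" and T: "0 \<le> T"
  shows "\<beta> *\<^sub>R integral {0..T} (\<lambda>t. \<Phi> (\<tau>0 + t * \<beta>)) =
    integral {\<tau>0..\<tau>0 + T * \<beta>} \<Phi> - integral {\<tau>0 + T * \<beta>..\<tau>0} \<Phi>"
proof -
  define L where "L = \<bar>\<tau>0\<bar> + T * \<bar>\<beta>\<bar>"
  have "\<tau>0 + t * \<beta> \<in> {-L..L}" if "t \<in> {0..T}" for t
  proof -
    have "\<bar>t * \<beta>\<bar> \<le> T * \<bar>\<beta>\<bar>"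
      using that by (auto simp: abs_mult intro!: mult_right_mono)
    then have "\<bar>\<tau>0 + t * \<beta>\<bar> \<le> L"
      unfolding L_def by linarith
    then show ?thesis
      using abs_le_D1 abs_le_D2 by fastforce
  qed
  then have "((\<lambda>t. \<beta> *\<^sub>R \<Phi> (\<tau>0 + t * \<beta>)) has_integral
      integral {\<tau>0 + 0 * \<beta>..\<tau>0 + T * \<beta>} \<Phi> - integral {\<tau>0 + T * \<beta>..\<tau>0 + 0 * \<beta>} \<Phi>) {0..T}"
    using T by (intro has_integral_substitution_general[of "{}" 0 T "\<lambda>t. \<tau>0 + t * \<beta>" "-L" L \<Phi> "\<lambda>_. \<beta>"])
      (auto intro!: derivative_eq_intros continuous_intros intro: continuous_on_subset[OF \<Phi>])
  then show ?thesis
    by (simp add: integral_unique flip: integral_cmul)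
qed

lemma integral_affine_sweep:
  fixes \<Phi> :: "real \<Rightarrow> 'a::euclidean_space"
  assumes \<Phi>: "continuous_on UNIV \<Phi>" "\<And>\<tau>. K \<le> \<bar>\<tau>\<bar> \<Longrightarrow> \<Phi> \<tau> = 0"
    and \<tau>0: "\<bar>\<tau>0\<bar> \<le> K" and \<beta>: "\<beta> \<noteq> 0" and T: "0 \<le> T" "2 * K \<le> T * \<bar>\<beta>\<bar>"
  shows "\<beta> *\<^sub>R integral {0..T} (\<lambda>t. \<Phi> (\<tau>0 + t * \<beta>)) =
    (if \<beta> > 0 then integral {-K..K} \<Phi> else 0) - integral {-K..\<tau>0} \<Phi>"
proof -
  define b where "b = \<tau>0 + T * \<beta>"
  have combine: "integral {x..y} \<Phi> + integral {y..z} \<Phi> = integral {x..z} \<Phi>" if "x \<le> y" "y \<le> z" for x y z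
    using that continuous_on_subset[OF \<Phi>(1) subset_UNIV] integrable_continuous_interval
    by (intro Henstock_Kurzweil_Integration.integral_combine) auto
  have null: "integral {x..y} \<Phi> = 0" if "y \<le> x" for x y
    using that by (metis box_real(2) content_real_eq_0 integral_null)
  have outside: "integral {x..y} \<Phi> = 0" if "K \<le> x \<or> y \<le> -K" for x y
    using that \<Phi>(2) by (intro integral_unique has_integral_is_0) auto
  show ?thesis
    unfolding integral_affine_substitution[OF \<Phi>(1) T(1)] b_def[symmetric]
  proof (cases "\<beta> > 0")
    case True
    then have "K \<le> b"
      using T \<tau>0 by (simp add: b_def)
    then have "integral {\<tau>0..b} \<Phi> = integral {\<tau>0..K} \<Phi>"
      using combine[of \<tau>0 K b] outside[of K b] \<tau>0 by simp
    moreover have "integral {-K..K} \<Phi> = integral {-K..\<tau>0} \<Phi> + integral {\<tau>0..K} \<Phi>"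
      using combine[of "-K" \<tau>0 K] \<tau>0 by simp
    ultimately show "integral {\<tau>0..b} \<Phi> - integral {b..\<tau>0} \<Phi> =
        (if \<beta> > 0 then integral {-K..K} \<Phi> else 0) - integral {-K..\<tau>0} \<Phi>"
      using True null[of \<tau>0 b] \<open>K \<le> b\<close> \<tau>0 by simp
  next
    case False
    then have "b \<le> -K"
      using T \<tau>0 \<beta> by (simp add: b_def)
    then have "integral {b..\<tau>0} \<Phi> = integral {-K..\<tau>0} \<Phi>"
      using combine[of b "-K" \<tau>0] outside[of b "-K"] \<tau>0 by simp
    then show "integral {\<tau>0..b} \<Phi> - integral {b..\<tau>0} \<Phi> =
        (if \<beta> > 0 then integral {-K..K} \<Phi> else 0) - integral {-K..\<tau>0} \<Phi>"
      using False null[of b \<tau>0] \<open>b \<le> -K\<close> \<tau>0 by simp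
  qed
qed

lemma integral_along_shifted_line:
  fixes P :: "real \<times> real \<Rightarrow> 'a::banach"
  assumes P: "continuous_on UNIV P" "vanishes_off_square r P" and S: "r + \<bar>t * g1\<bar> \<le> S"
  shows "integral {-S..S} (\<lambda>s. P (s + t * g1, u * s + \<tau>0 + t * g2)) =
    line_transform r P u (\<tau>0 + t * (g2 - u * g1))"
proof -
  define F where "F x = P (x, u * x + (\<tau>0 + t * (g2 - u * g1)))" for x
  have "integral {-S..S} (\<lambda>s. P (s + t * g1, u * s + \<tau>0 + t * g2)) =
      integral {-S..S} (\<lambda>s. F (s + t * g1))"
    by (simp add: F_def algebra_simps)
  also have "\<dots> = integral {-r..r} F"
  proof (rule integral_shift_eq_on_support)
    show "continuous_on UNIV F"
      unfolding F_def by (intro continuous_on_compose_pair[OF P(1)] continuous_intros)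
    show "F x = 0" if "x \<notin> {-r..r}" for x
      using that P(2) by (auto simp: F_def vanishes_off_square_def)
    show "{-r..r} \<subseteq> {-S + t * g1..S + t * g1}"
      using S by auto
  qed
  finally show ?thesis
    by (simp add: F_def[abs_def] line_transform_def)
qed

lemma integral_truncated_rays_across_line:
  fixes P :: "real \<times> real \<Rightarrow> 'a::euclidean_space" and r u g1 g2 :: real
  defines "K \<equiv> r * (1 + \<bar>u\<bar>)" and "\<beta> \<equiv> g2 - u * g1"
  assumes P: "continuous_on UNIV P" "vanishes_off_square r P"
    and \<beta>: "\<beta> \<noteq> 0" and \<tau>0: "\<bar>\<tau>0\<bar> \<le> K"
    and T: "0 \<le> T" "2 * K \<le> T * \<bar>\<beta>\<bar>" and S: "r + T * \<bar>g1\<bar> \<le> S"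
  shows "\<beta> *\<^sub>R integral {-S..S} (\<lambda>s. integral {0..T} (\<lambda>t. P (s + t * g1, u * s + \<tau>0 + t * g2))) =
    (if \<beta> > 0 then integral {-K..K} (line_transform r P u) else 0) -
      integral {-K..\<tau>0} (line_transform r P u)"
proof -
  have "continuous_on UNIV (\<lambda>x. P (fst x + snd x * g1, u * fst x + \<tau>0 + snd x * g2))"
    by (intro continuous_on_compose_pair[OF P(1)] continuous_intros)
  then have "continuous_on (cbox (-S, 0) (S, T)) (\<lambda>(s, t). P (s + t * g1, u * s + \<tau>0 + t * g2))"
    by (simp add: case_prod_unfold) (meson continuous_on_subset subset_UNIV)
  then have "integral {-S..S} (\<lambda>s. integral {0..T} (\<lambda>t. P (s + t * g1, u * s + \<tau>0 + t * g2))) =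
      integral {0..T} (\<lambda>t. integral {-S..S} (\<lambda>s. P (s + t * g1, u * s + \<tau>0 + t * g2)))"
    using integral_swap_continuous by fastforce
  also have "\<dots> = integral {0..T} (\<lambda>t. line_transform r P u (\<tau>0 + t * \<beta>))"
  proof (rule integral_cong)
    fix t
    assume "t \<in> {0..T}"
    then have "\<bar>t * g1\<bar> \<le> T * \<bar>g1\<bar>"
      by (auto simp: abs_mult intro!: mult_right_mono)
    then show "integral {-S..S} (\<lambda>s. P (s + t * g1, u * s + \<tau>0 + t * g2)) =
        line_transform r P u (\<tau>0 + t * \<beta>)"
      using integral_along_shifted_line[OF P] S by (simp add: \<beta>_def)
  qed
  finally show ?thesis
    using integral_affine_sweep[OF continuous_on_line_transform[OF P(1)] _ \<tau>0 \<beta> T]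
      line_transform_eq_0_far[OF P(2)] by (simp add: K_def)
qed

lemma ray_leaves_square:
  assumes "vanishes_off_square r P" "\<bar>\<tau>0\<bar> \<le> r * (1 + \<bar>u\<bar>)"
    and "2 * (r * (1 + \<bar>u\<bar>)) \<le> t * \<bar>g2 - u * g1\<bar>"
  shows "P (s + t * g1, u * s + \<tau>0 + t * g2) = 0"
proof (cases "r \<le> \<bar>s + t * g1\<bar>")
  case True
  then show ?thesis
    using assms(1) by (simp add: vanishes_off_square_def)
next
  case False
  have "\<bar>u * (s + t * g1)\<bar> \<le> \<bar>u\<bar> * r"
    using False by (auto simp: abs_mult intro!: mult_left_mono)
  moreover have "t * \<bar>g2 - u * g1\<bar> \<le> \<bar>t * (g2 - u * g1)\<bar>"
    by (simp add: abs_mult mult_right_mono)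
  moreover have "u * s + \<tau>0 + t * g2 = u * (s + t * g1) + \<tau>0 + t * (g2 - u * g1)"
    by (simp add: algebra_simps)
  ultimately have "r \<le> \<bar>u * s + \<tau>0 + t * g2\<bar>"
    using assms(2,3) by (simp add: algebra_simps)
  then show ?thesis
    using assms(1) by (simp add: vanishes_off_square_def)
qed

lemma has_integral_Ici_if_vanishes_beyond:
  fixes F :: "real \<Rightarrow> 'a::banach"
  assumes "a \<le> b" "continuous_on {a..b} F" "\<And>t. b \<le> t \<Longrightarrow> F t = 0"
  shows "(F has_integral integral {a..b} F) {a..}"
proof -
  have "((\<lambda>t. if t \<in> {a..b} then F t else 0) has_integral integral {a..b} F) {a..}"
    using assms(2)
    by (subst has_integral_restrict) (auto intro: integrable_integral integrable_continuous_interval)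
  then show ?thesis
    by (rule has_integral_cong[THEN iffD1, rotated]) (use assms(3) in auto)
qed

lemma ray_integral_eq_truncated:
  fixes P :: "real \<times> real \<Rightarrow> 'a::banach" and r u g1 g2 :: real
  defines "K \<equiv> r * (1 + \<bar>u\<bar>)" and "\<beta> \<equiv> g2 - u * g1"
  assumes P: "continuous_on UNIV P" "vanishes_off_square r P"
    and \<tau>0: "\<bar>\<tau>0\<bar> \<le> K" and T: "0 \<le> T" "2 * K \<le> T * \<bar>\<beta>\<bar>"
  shows "integral {0..} (\<lambda>t. P (s + t * g1, u * s + \<tau>0 + t * g2)) =
    integral {0..T} (\<lambda>t. P (s + t * g1, u * s + \<tau>0 + t * g2))"
proof (rule integral_unique[OF has_integral_Ici_if_vanishes_beyond[OF T(1)]])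
  show "continuous_on {0..T} (\<lambda>t. P (s + t * g1, u * s + \<tau>0 + t * g2))"
    by (intro continuous_on_compose_pair[OF P(1)] continuous_intros)
  fix t
  assume "T \<le> t"
  then have "2 * K \<le> t * \<bar>\<beta>\<bar>"
    using T(2) by (meson abs_ge_zero mult_right_mono order_trans)
  then show "P (s + t * g1, u * s + \<tau>0 + t * g2) = 0"
    using ray_leaves_square[OF P(2)] \<tau>0 by (simp add: K_def \<beta>_def)
qed

lemma integral_ray_sums_across_line:
  fixes H :: "real \<times> real \<Rightarrow> 'a::euclidean_space" and w :: "nat \<Rightarrow> 'a"
    and c g1 g2 :: "nat \<Rightarrow> real" and r u :: real
  defines "K \<equiv> r * (1 + \<bar>u\<bar>)"
  assumes H: "continuous_on UNIV H" "vanishes_off_square r H"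
    and \<beta>: "\<forall>i<m. g2 i - u * g1 i \<noteq> 0" and \<tau>: "\<bar>\<tau>\<bar> \<le> K" and "0 \<le> T"
    and T: "\<And>i. i < m \<Longrightarrow> 2 * K \<le> T * \<bar>g2 i - u * g1 i\<bar>"
    and S: "\<And>i. i < m \<Longrightarrow> r + T * \<bar>g1 i\<bar> \<le> S"
  shows "integral {-S..S}
      (\<lambda>s. \<Sum>i<m. c i * (w i \<bullet> integral {0..} (\<lambda>t. H (s + t * g1 i, u * s + \<tau> + t * g2 i)))) =
    (\<Sum>i<m. (c i / (g2 i - u * g1 i)) *
      (w i \<bullet> (if g2 i - u * g1 i > 0 then integral {-K..K} (line_transform r H u) else 0))) -
    (\<Sum>i<m. (c i / (g2 i - u * g1 i)) *\<^sub>R w i) \<bullet> integral {-K..\<tau>} (line_transform r H u)"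
proof -
  define \<beta> where "\<beta> i = g2 i - u * g1 i" for i
  define Pr where "Pr = integral {-K..\<tau>} (line_transform r H u)"
  define A where "A i = (if \<beta> i > 0 then integral {-K..K} (line_transform r H u) else 0)" for i
  define R where "R i s = integral {0..T} (\<lambda>t. H (s + t * g1 i, u * s + \<tau> + t * g2 i))" for i s
  have cR: "continuous_on UNIV (R i)" for i
  proof -
    have "continuous_on (UNIV \<times> cbox 0 T) (\<lambda>(s, t). H (s + t * g1 i, u * s + \<tau> + t * g2 i))"
      unfolding case_prod_unfold by (intro continuous_on_compose_pair[OF H(1)] continuous_intros)
    from integral_continuous_on_param[OF this] show ?thesis
      by (simp add: R_def[abs_def])
  qed
  have "integral {-S..S}
      (\<lambda>s. \<Sum>i<m. c i * (w i \<bullet> integral {0..} (\<lambda>t. H (s + t * g1 i, u * s + \<tau> + t * g2 i)))) =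
      integral {-S..S} (\<lambda>s. \<Sum>i<m. c i * (w i \<bullet> R i s))"
    unfolding R_def using ray_integral_eq_truncated[OF H _ \<open>0 \<le> T\<close>] \<tau> T by (simp add: K_def)
  also have "\<dots> = (\<Sum>i<m. c i * (w i \<bullet> integral {-S..S} (R i)))"
  proof -
    have "R i integrable_on {-S..S}" for i
      using cR by (meson continuous_on_subset integrable_continuous_interval subset_UNIV)
    then show ?thesis
      by (simp add: integral_sum integrable_on_mult_right integrable_component inner_commute[of "w _"])
  qed
  also have "\<dots> = (\<Sum>i<m. c i * (w i \<bullet> ((1 / \<beta> i) *\<^sub>R (A i - Pr))))"
  proof (rule sum.cong[OF refl])
    fix i
    assume "i \<in> {..<m}"
    then have sweep: "\<beta> i *\<^sub>R integral {-S..S} (R i) = A i - Pr"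
      using integral_truncated_rays_across_line[OF H _ \<tau>[unfolded K_def] \<open>0 \<le> T\<close>] \<beta> T S
      by (simp add: R_def[abs_def] A_def Pr_def K_def \<beta>_def)
    have "integral {-S..S} (R i) = (1 / \<beta> i) *\<^sub>R (\<beta> i *\<^sub>R integral {-S..S} (R i))"
      using \<beta> \<open>i \<in> {..<m}\<close> by (simp add: \<beta>_def)
    then show "c i * (w i \<bullet> integral {-S..S} (R i)) = c i * (w i \<bullet> ((1 / \<beta> i) *\<^sub>R (A i - Pr)))"
      by (simp only: sweep)
  qed
  also have "\<dots> = (\<Sum>i<m. (c i / \<beta> i) * (w i \<bullet> A i)) - (\<Sum>i<m. (c i / \<beta> i) *\<^sub>R w i) \<bullet> Pr"
    by (simp add: inner_diff_right inner_sum_left sum_subtractf algebra_simps)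
  finally show ?thesis
    by (simp add: A_def Pr_def \<beta>_def)
qed

lemma line_primitive_orthogonal:
  fixes H :: "real \<times> real \<Rightarrow> 'a::euclidean_space" and w :: "nat \<Rightarrow> 'a"
    and c g1 g2 :: "nat \<Rightarrow> real" and r u :: real
  defines "K \<equiv> r * (1 + \<bar>u\<bar>)"
  assumes H: "continuous_on UNIV H" "vanishes_off_square r H"
    and \<beta>: "\<forall>i<m. g2 i - u * g1 i \<noteq> 0"
    and rays: "\<And>x y. (\<Sum>i<m. c i * (w i \<bullet> integral {0..} (\<lambda>t. H (x + t * g1 i, y + t * g2 i)))) = 0"
    and \<tau>: "\<bar>\<tau>\<bar> \<le> K"
  shows "(\<Sum>i<m. (c i / (g2 i - u * g1 i)) *\<^sub>R w i) \<bullet> integral {-K..\<tau>} (line_transform r H u) = 0"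
proof -
  \<comment> \<open>By time \<open>T\<close> every ray from the part of the line near the square has left the square.\<close>
  define T where "T = 2 * K * (\<Sum>i<m. 1 / \<bar>g2 i - u * g1 i\<bar>)"
  define S where "S = r + T * (\<Sum>i<m. \<bar>g1 i\<bar>)"
  have "0 \<le> K"
    using \<tau> by linarith
  then have "0 \<le> T"
    by (simp add: T_def sum_nonneg)
  have T: "2 * K \<le> T * \<bar>g2 i - u * g1 i\<bar>" if "i < m" for i
  proof -
    have "1 / \<bar>g2 i - u * g1 i\<bar> \<le> (\<Sum>i<m. 1 / \<bar>g2 i - u * g1 i\<bar>)"
      using that by (intro member_le_sum) auto
    then have "2 * K * (1 / \<bar>g2 i - u * g1 i\<bar>) * \<bar>g2 i - u * g1 i\<bar> \<le> T * \<bar>g2 i - u * g1 i\<bar>"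
      unfolding T_def using \<open>0 \<le> K\<close> by (intro mult_right_mono mult_left_mono) auto
    then show ?thesis
      using \<beta> that by simp
  qed
  have S: "r + T * \<bar>g1 i\<bar> \<le> S" if "i < m" for i
    unfolding S_def using that \<open>0 \<le> T\<close> by (auto intro!: mult_left_mono member_le_sum)
  have sweep: "(\<Sum>i<m. (c i / (g2 i - u * g1 i)) *
      (w i \<bullet> (if g2 i - u * g1 i > 0 then integral {-K..K} (line_transform r H u) else 0))) -
    (\<Sum>i<m. (c i / (g2 i - u * g1 i)) *\<^sub>R w i) \<bullet> integral {-K..\<tau>'} (line_transform r H u) = 0"
    if "\<bar>\<tau>'\<bar> \<le> K" for \<tau>'
    using integral_ray_sums_across_line[OF H \<beta> that[unfolded K_def] \<open>0 \<le> T\<close> T[unfolded K_def] S,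
        of c w, folded K_def]
    by (simp add: rays)
  \<comment> \<open>The primitive vanishes at \<open>-K\<close>, which kills the constant term.\<close>
  have "(\<Sum>i<m. (c i / (g2 i - u * g1 i)) *
      (w i \<bullet> (if g2 i - u * g1 i > 0 then integral {-K..K} (line_transform r H u) else 0))) = 0"
    using sweep[of "-K"] \<open>0 \<le> K\<close> by simp
  then show ?thesis
    using sweep[OF \<tau>] by simp
qed

lemma inner_vec2: "(x :: real^2) \<bullet> y = x $ 1 * y $ 1 + x $ 2 * y $ 2"
  by (simp add: inner_vec_def sum_2)

lemma perp_sum_scaleR: "perp (\<Sum>i\<in>A. a i *\<^sub>R v i) = (\<Sum>i\<in>A. a i *\<^sub>R perp (v i))"
  by (simp add: perp_def vec_eq_iff forall_2 sum_component sum_negf)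

lemma eq_0_if_orthogonal_to_vector_and_perp:
  fixes v x :: "real^2"
  assumes "v \<noteq> 0" "v \<bullet> x = 0" "perp v \<bullet> x = 0"
  shows "x = 0"
proof -
  have eqs: "v $ 1 * x $ 1 + v $ 2 * x $ 2 = 0" "v $ 1 * x $ 2 - v $ 2 * x $ 1 = 0"
    using assms(2,3) by (simp_all add: inner_vec2 perp_def)
  have "(v $ 1 ^ 2 + v $ 2 ^ 2) * x $ 1 = 0" "(v $ 1 ^ 2 + v $ 2 ^ 2) * x $ 2 = 0"
    using arg_cong2[OF eqs, of "\<lambda>p q. v $ 1 * p - v $ 2 * q"]
      arg_cong2[OF eqs, of "\<lambda>p q. v $ 2 * p + v $ 1 * q"]
    by (simp_all add: algebra_simps power2_eq_square)
  moreover have "v $ 1 ^ 2 + v $ 2 ^ 2 \<noteq> 0"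
    using assms(1) by (simp add: vec_eq_iff forall_2)
  ultimately show ?thesis
    by (auto simp: vec_eq_iff forall_2)
qed

lemma vanishes_if_primitive_vanishes:
  fixes F :: "real \<Rightarrow> 'a::banach"
  assumes "continuous_on {a..b} F" "a < b" "\<And>y. y \<in> {a..b} \<Longrightarrow> integral {a..y} F = 0"
    and x: "x \<in> {a..b}"
  shows "F x = 0"
proof -
  have "((\<lambda>y. integral {a..y} F) has_vector_derivative F x) (at x within {a..b})"
    by (rule integral_has_vector_derivative[OF assms(1) x])
  moreover have "((\<lambda>y. integral {a..y} F) has_vector_derivative 0) (at x within {a..b})"
    using assms(3) x by (intro has_vector_derivative_transform[OF x _ has_vector_derivative_const]) auto
  ultimately show ?thesis
    using vector_derivative_unique_within_closed_interval[of a b x] assms(2) x by auto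
qed

definition weighted_directions :: "nat \<Rightarrow> (nat \<Rightarrow> real) \<Rightarrow> (nat \<Rightarrow> real^2) \<Rightarrow> real \<Rightarrow> real^2" where
  "weighted_directions m c gam u = (\<Sum>i<m. (c i / (gam i $ 2 - u * gam i $ 1)) *\<^sub>R gam i)"

lemma line_transform_eq_0_if_ray_sums_vanish:
  fixes H :: "real \<times> real \<Rightarrow> real^2" and gam :: "nat \<Rightarrow> real^2" and c :: "nat \<Rightarrow> real"
  assumes H: "continuous_on UNIV H" "vanishes_off_square r H" and r: "r > 0"
    and \<beta>: "\<forall>i<m. gam i $ 2 - u * gam i $ 1 \<noteq> 0"
    and V: "weighted_directions m c gam u \<noteq> 0"
    and rays: "\<And>x y. (\<Sum>i<m. c i *
      (gam i \<bullet> integral {0..} (\<lambda>t. H (x + t * gam i $ 1, y + t * gam i $ 2)))) = 0"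
    and rays_perp: "\<And>x y. (\<Sum>i<m. c i *
      (perp (gam i) \<bullet> integral {0..} (\<lambda>t. H (x + t * gam i $ 1, y + t * gam i $ 2)))) = 0"
  shows "line_transform r H u \<tau> = 0"
proof -
  define K where "K = r * (1 + \<bar>u\<bar>)"
  have "0 < K"
    using r by (simp add: K_def add_pos_nonneg)
  have primitive: "integral {-K..\<tau>'} (line_transform r H u) = 0" if "\<tau>' \<in> {-K..K}" for \<tau>'
  proof (rule eq_0_if_orthogonal_to_vector_and_perp[OF V])
    show "weighted_directions m c gam u \<bullet> integral {-K..\<tau>'} (line_transform r H u) = 0"
      using line_primitive_orthogonal[OF H \<beta> rays] that
      by (simp add: weighted_directions_def K_def abs_le_iff)
    show "perp (weighted_directions m c gam u) \<bullet> integral {-K..\<tau>'} (line_transform r H u) = 0"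
      using line_primitive_orthogonal[OF H \<beta> rays_perp] that
      by (simp add: weighted_directions_def K_def abs_le_iff perp_sum_scaleR)
  qed
  have "continuous_on {-K..K} (line_transform r H u)"
    using continuous_on_line_transform[OF H(1)] continuous_on_subset by blast
  then have "line_transform r H u \<tau> = 0" if "\<tau> \<in> {-K..K}"
    using vanishes_if_primitive_vanishes[OF _ _ primitive that] \<open>0 < K\<close> by simp
  moreover have "line_transform r H u \<tau> = 0" if "\<tau> \<notin> {-K..K}"
  proof -
    have "K \<le> \<bar>\<tau>\<bar>"
      using that by auto
    then show ?thesis
      using line_transform_eq_0_far[OF H(2)] by (simp add: K_def)
  qed
  ultimately show ?thesis
    by blast
qed

section \<open>Slopes avoiding the directions\<close>

lemma even_card_if_closed_under_uminus:
  fixes A :: "'a::real_vector set"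
  assumes "finite A" "0 \<notin> A" "\<And>x. x \<in> A \<Longrightarrow> - x \<in> A"
  shows "even (card A)"
  using assms
proof (induction A rule: finite_psubset_induct)
  case (psubset A)
  show ?case
  proof (cases "A = {}")
    case False
    then obtain x where x: "x \<in> A"
      by blast
    have "x \<noteq> - x"
    proof
      assume "x = - x"
      then have "2 *\<^sub>R x = 0"
        by (metis scaleR_2 add.right_inverse)
      then show False
        using x psubset.prems(1) by auto
    qed
    define B where "B = A - {x, - x}"
    have "B \<subset> A"
      using x by (auto simp: B_def)
    moreover have "0 \<notin> B" "\<And>y. y \<in> B \<Longrightarrow> - y \<in> B"
      using psubset.prems by (auto simp: B_def)
    ultimately have "even (card B)"
      using psubset.IH by blast
    moreover have "card A = card B + 2"
    proof -
      have sub: "{x, - x} \<subseteq> A"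
        using x psubset.prems(2) by auto
      moreover have "card {x, - x} = 2"
        using \<open>x \<noteq> - x\<close> by simp
      ultimately show ?thesis
        using card_mono[OF psubset.hyps sub] card_Diff_subset[OF _ sub] by (simp add: B_def)
    qed
    ultimately show ?thesis
      by simp
  qed simp
qed

definition parallel_class :: "nat \<Rightarrow> (nat \<Rightarrow> real^2) \<Rightarrow> nat \<Rightarrow> nat set" where
  "parallel_class m gam k = {j. j < m \<and> (gam j = gam k \<or> gam j = - gam k)}"

lemma even_if_parallel_class_sums_vanish:
  assumes inj: "inj_on gam {..<m}" and nz: "\<forall>i<m. gam i \<noteq> 0" and c: "\<forall>i<m. c i \<noteq> 0"
    and sums: "\<forall>k<m. sum c (parallel_class m gam k) = 0"
  shows "even m"
proof -
  have "- gam k \<in> gam ` {..<m}" if k: "k < m" for k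
  proof (rule ccontr)
    assume "- gam k \<notin> gam ` {..<m}"
    then have "parallel_class m gam k = {k}"
      using inj k by (auto simp: parallel_class_def inj_on_def image_iff eq_commute[of "- gam k"])
    then show False
      using sums c k by auto
  qed
  then have "even (card (gam ` {..<m}))"
    using nz by (intro even_card_if_closed_under_uminus) auto
  then show ?thesis
    by (simp add: card_image[OF inj])
qed

lemma unit_vectors_parallel_iff:
  fixes a b :: "real^2"
  assumes "norm a = 1" "norm b = 1"
  shows "a $ 1 * b $ 2 = a $ 2 * b $ 1 \<longleftrightarrow> b = a \<or> b = - a"
proof
  assume par: "a $ 1 * b $ 2 = a $ 2 * b $ 1"
  have unit: "x $ 1 ^ 2 + x $ 2 ^ 2 = 1" if "norm x = 1" for x :: "real^2"
    using that by (metis inner_vec2 norm_eq_1 power2_eq_square)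
  define l where "l = a \<bullet> b"
  have "l * a $ 1 = (a $ 1 ^ 2 + a $ 2 ^ 2) * b $ 1" "l * a $ 2 = (a $ 1 ^ 2 + a $ 2 ^ 2) * b $ 2"
    using par by (simp_all add: l_def inner_vec2 algebra_simps power2_eq_square)
  then have b: "b $ 1 = l * a $ 1" "b $ 2 = l * a $ 2"
    using unit[OF assms(1)] by simp_all
  then have "l ^ 2 * (a $ 1 ^ 2 + a $ 2 ^ 2) = 1"
    using unit[OF assms(2)] by (simp add: power_mult_distrib algebra_simps)
  then have "l = 1 \<or> l = -1"
    using unit[OF assms(1)] by (simp add: power2_eq_1_iff)
  then show "b = a \<or> b = - a"
    using b by (auto simp: vec_eq_iff forall_2)
qed auto

lemma sum_parallel_class:
  "(\<Sum>i<m. if i \<in> parallel_class m gam k then c i else 0) = sum c (parallel_class m gam k)"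
proof -
  have "parallel_class m gam k \<subseteq> {..<m}"
    by (auto simp: parallel_class_def)
  then show ?thesis
    by (simp add: sum.inter_restrict[symmetric] Int_absorb1)
qed

lemma tendsto_direction_term_at_slope:
  fixes gam :: "nat \<Rightarrow> real^2"
  assumes unit: "\<forall>i<m. norm (gam i) = 1" and i: "i < m" and k: "k < m" "gam k $ 1 \<noteq> 0"
  defines "s0 \<equiv> gam k $ 2 / gam k $ 1"
  shows "((\<lambda>u. (s0 - u) * (c / (gam i $ 2 - u * gam i $ 1) * gam i $ 1))
    \<longlongrightarrow> (if i \<in> parallel_class m gam k then c else 0)) (at s0)"
proof (cases "i \<in> parallel_class m gam k")
  case True
  then have "gam i = gam k \<or> gam i = - gam k"
    by (simp add: parallel_class_def)
  then have "gam i $ 1 \<noteq> 0" "gam i $ 2 = s0 * gam i $ 1"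
    using k(2) by (auto simp: s0_def)
  then have "(s0 - u) * (c / (gam i $ 2 - u * gam i $ 1) * gam i $ 1) = c" if "u \<noteq> s0" for u
  proof -
    have "gam i $ 2 - u * gam i $ 1 = (s0 - u) * gam i $ 1"
      using \<open>gam i $ 2 = s0 * gam i $ 1\<close> by (simp add: left_diff_distrib)
    then show ?thesis
      using that \<open>gam i $ 1 \<noteq> 0\<close> by simp
  qed
  then show ?thesis
    using True by (intro tendsto_eventually) (auto simp: eventually_at_filter)
next
  case False
  have "gam i $ 2 - s0 * gam i $ 1 \<noteq> 0"
  proof
    assume "gam i $ 2 - s0 * gam i $ 1 = 0"
    then have "gam k $ 1 * gam i $ 2 = gam k $ 2 * gam i $ 1"
      using k(2) by (simp add: s0_def field_simps)
    then have "i \<in> parallel_class m gam k"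
      using unit_vectors_parallel_iff unit i k(1) by (auto simp: parallel_class_def)
    then show False
      using False by blast
  qed
  then have "((\<lambda>u. (s0 - u) * (c / (gam i $ 2 - u * gam i $ 1) * gam i $ 1))
      \<longlongrightarrow> (s0 - s0) * (c / (gam i $ 2 - s0 * gam i $ 1) * gam i $ 1)) (at s0)"
    by (intro tendsto_intros) auto
  then show ?thesis
    using False by simp
qed

lemma tendsto_weighted_directions_at_slope:
  fixes gam :: "nat \<Rightarrow> real^2" and c :: "nat \<Rightarrow> real"
  assumes unit: "\<forall>i<m. norm (gam i) = 1" and k: "k < m" "gam k $ 1 \<noteq> 0"
  defines "s0 \<equiv> gam k $ 2 / gam k $ 1"
  shows "((\<lambda>u. (s0 - u) * weighted_directions m c gam u $ 1)
           \<longlongrightarrow> sum c (parallel_class m gam k)) (at s0)"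
proof -
  have "((\<lambda>u. \<Sum>i<m. (s0 - u) * (c i / (gam i $ 2 - u * gam i $ 1) * gam i $ 1))
      \<longlongrightarrow> (\<Sum>i<m. if i \<in> parallel_class m gam k then c i else 0)) (at s0)"
    unfolding s0_def using tendsto_direction_term_at_slope[OF unit _ k] by (intro tendsto_sum) auto
  then show ?thesis
    by (simp add: weighted_directions_def sum_parallel_class sum_component sum_distrib_left)
qed

lemma filterlim_affine_at_infinity:
  fixes a b :: real
  assumes "b \<noteq> 0"
  shows "filterlim (\<lambda>u. a - u * b) at_infinity at_top"
proof -
  have "filterlim (\<lambda>u. a + (- b) * u) at_infinity at_top"
    using assms by (intro tendsto_add_filterlim_at_infinity[OF tendsto_const]
        tendsto_mult_filterlim_at_infinity[OF tendsto_const]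
        filterlim_at_top_imp_at_infinity[OF filterlim_ident]) auto
  then show ?thesis
    by (simp add: mult.commute)
qed

lemma tendsto_direction_term_at_top:
  fixes gam :: "nat \<Rightarrow> real^2"
  assumes unit: "\<forall>i<m. norm (gam i) = 1" and i: "i < m" and k: "k < m" "gam k $ 1 = 0"
  shows "((\<lambda>u. c / (gam i $ 2 - u * gam i $ 1) * gam i $ 2)
    \<longlongrightarrow> (if i \<in> parallel_class m gam k then c else 0)) at_top"
proof -
  have nz: "x $ 2 \<noteq> 0" if "norm x = 1" "x $ 1 = 0" for x :: "real^2"
  proof
    assume "x $ 2 = 0"
    then have "x = 0"
      using that(2) by (simp add: vec_eq_iff forall_2)
    then show False
      using that(1) by simp
  qed
  have in_class: "i \<in> parallel_class m gam k \<longleftrightarrow> gam i $ 1 = 0"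
    using unit_vectors_parallel_iff[of "gam k" "gam i"] nz[of "gam k"] unit i k
    by (auto simp: parallel_class_def)
  show ?thesis
  proof (cases "gam i $ 1 = 0")
    case True
    then have "gam i $ 2 \<noteq> 0"
      using nz unit i by blast
    then show ?thesis
      using True in_class by simp
  next
    case False
    then have "((\<lambda>u. c * gam i $ 2 / (gam i $ 2 - u * gam i $ 1)) \<longlongrightarrow> 0) at_top"
      by (intro tendsto_divide_0[OF tendsto_const] filterlim_affine_at_infinity)
    then show ?thesis
      using False in_class by simp
  qed
qed

lemma tendsto_weighted_directions_at_top:
  fixes gam :: "nat \<Rightarrow> real^2" and c :: "nat \<Rightarrow> real"
  assumes unit: "\<forall>i<m. norm (gam i) = 1" and k: "k < m" "gam k $ 1 = 0"
  shows "((\<lambda>u. weighted_directions m c gam u $ 2)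
           \<longlongrightarrow> sum c (parallel_class m gam k)) at_top"
proof -
  have "((\<lambda>u. \<Sum>i<m. c i / (gam i $ 2 - u * gam i $ 1) * gam i $ 2)
      \<longlongrightarrow> (\<Sum>i<m. if i \<in> parallel_class m gam k then c i else 0)) at_top"
    using tendsto_direction_term_at_top[OF unit _ k] by (intro tendsto_sum) auto
  then show ?thesis
    by (simp add: weighted_directions_def sum_parallel_class sum_component)
qed

lemma infinite_if_eventually_at:
  fixes x :: real
  assumes "eventually P (at x)"
  shows "infinite {y. P y}"
proof -
  obtain d where "d > 0" "\<And>y. y \<noteq> x \<Longrightarrow> dist y x < d \<Longrightarrow> P y"
    using assms by (auto simp: eventually_at)
  then have "{x<..<x + d} \<subseteq> {y. P y}"
    by (auto simp: dist_real_def)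
  then show ?thesis
    using infinite_Ioo[of x "x + d"] \<open>d > 0\<close> finite_subset by (metis less_add_same_cancel1)
qed

lemma infinite_if_eventually_at_top:
  fixes P :: "real \<Rightarrow> bool"
  assumes "eventually P at_top"
  shows "infinite {y. P y}"
proof -
  obtain N where "\<And>y. N \<le> y \<Longrightarrow> P y"
    using assms by (auto simp: eventually_at_top_linorder)
  then have "{N..} \<subseteq> {y. P y}"
    by auto
  then show ?thesis
    using infinite_Ici finite_subset by blast
qed

lemma finite_parallel_slopes:
  fixes gam :: "nat \<Rightarrow> real^2"
  assumes "\<forall>i<m. gam i \<noteq> 0"
  shows "finite {u. \<exists>i<m. gam i $ 2 - u * gam i $ 1 = 0}"
proof -
  have "finite {u. gam i $ 2 - u * gam i $ 1 = 0}" if "i < m" for i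
  proof (cases "gam i $ 1 = 0")
    case True
    then have "gam i $ 2 \<noteq> 0"
      using assms that by (auto simp: vec_eq_iff forall_2)
    then show ?thesis
      using True by simp
  next
    case False
    then have "{u. gam i $ 2 - u * gam i $ 1 = 0} \<subseteq> {gam i $ 2 / gam i $ 1}"
      by (auto simp: field_simps)
    then show ?thesis
      using finite_subset by blast
  qed
  then show ?thesis
    by (simp add: Collect_ex_eq Collect_conj_eq[symmetric] del: Collect_ex_eq)
qed

lemma infinite_good_slopes:
  fixes gam :: "nat \<Rightarrow> real^2" and c :: "nat \<Rightarrow> real"
  assumes inj: "inj_on gam {..<m}" and unit: "\<forall>i<m. norm (gam i) = 1"
    and c: "\<forall>i<m. c i \<noteq> 0" and "odd m"
  shows "infinite {u. (\<forall>i<m. gam i $ 2 - u * gam i $ 1 \<noteq> 0) \<and>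
    weighted_directions m c gam u \<noteq> 0}"
proof -
  have nz: "\<forall>i<m. gam i \<noteq> 0"
    using unit by auto
  obtain k where k: "k < m" "sum c (parallel_class m gam k) \<noteq> 0"
    using even_if_parallel_class_sums_vanish[OF inj nz c] \<open>odd m\<close> by blast
  have "infinite {u. weighted_directions m c gam u \<noteq> 0}"
  proof (cases "gam k $ 1 = 0")
    case True
    have "eventually (\<lambda>u. weighted_directions m c gam u $ 2 \<noteq> 0) at_top"
      using tendsto_imp_eventually_ne[OF tendsto_weighted_directions_at_top[OF unit k(1) True] k(2)]
      by simp
    then have "eventually (\<lambda>u. weighted_directions m c gam u \<noteq> 0) at_top"
      by (rule eventually_mono) auto
    then show ?thesis
      by (rule infinite_if_eventually_at_top)
  next
    case False
    define s0 where "s0 = gam k $ 2 / gam k $ 1"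
    have "eventually (\<lambda>u. (s0 - u) * weighted_directions m c gam u $ 1 \<noteq> 0) (at s0)"
      using tendsto_imp_eventually_ne[OF tendsto_weighted_directions_at_slope[OF unit k(1) False] k(2)]
      by (simp add: s0_def)
    then have "eventually (\<lambda>u. weighted_directions m c gam u \<noteq> 0) (at s0)"
      by (rule eventually_mono) auto
    then show ?thesis
      by (rule infinite_if_eventually_at)
  qed
  then have "infinite ({u. weighted_directions m c gam u \<noteq> 0} -
      {u. \<exists>i<m. gam i $ 2 - u * gam i $ 1 = 0})"
    using Diff_infinite_finite finite_parallel_slopes[OF nz] by blast
  then show ?thesis
    by (rule infinite_super[rotated]) auto
qed

section \<open>The star transform\<close>

lemma integrable_on_ray:
  fixes \<phi> :: "'a::real_normed_vector \<Rightarrow> 'b::banach"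
  assumes "continuous_on UNIV \<phi>" "\<And>z. r \<le> norm z \<Longrightarrow> \<phi> z = 0" "norm \<gamma> = 1"
  shows "(\<lambda>t. \<phi> (x + t *\<^sub>R \<gamma>)) integrable_on {0..}"
proof -
  have "((\<lambda>t. \<phi> (x + t *\<^sub>R \<gamma>)) has_integral integral {0..\<bar>r\<bar> + norm x} (\<lambda>t. \<phi> (x + t *\<^sub>R \<gamma>))) {0..}"
  proof (rule has_integral_Ici_if_vanishes_beyond)
    show "continuous_on {0..\<bar>r\<bar> + norm x} (\<lambda>t. \<phi> (x + t *\<^sub>R \<gamma>))"
      by (rule continuous_on_compose2[OF assms(1)]) (auto intro!: continuous_intros)
    fix t
    assume t: "\<bar>r\<bar> + norm x \<le> t"
    have "norm (t *\<^sub>R \<gamma>) \<le> norm (x + t *\<^sub>R \<gamma>) + norm x"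
      by (metis add_diff_cancel_left' norm_triangle_ineq4)
    moreover have "0 \<le> t"
      using t by (meson abs_ge_zero add_nonneg_nonneg norm_ge_zero order_trans)
    then have "norm (t *\<^sub>R \<gamma>) = t"
      using assms(3) by simp
    ultimately show "\<phi> (x + t *\<^sub>R \<gamma>) = 0"
      using t assms(2) by simp
  qed simp
  then show ?thesis
    by blast
qed

lemma ray_transform_inner_diff:
  fixes f g :: "real^2 \<Rightarrow> real^2"
  assumes "continuous_on UNIV f" "continuous_on UNIV g"
    and "\<And>z. r \<le> norm z \<Longrightarrow> f z = 0" "\<And>z. r \<le> norm z \<Longrightarrow> g z = 0" and "norm \<gamma> = 1"
  shows "ray_transform \<gamma> (\<lambda>y. f y \<bullet> w) x - ray_transform \<gamma> (\<lambda>y. g y \<bullet> w) x =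
    w \<bullet> integral {0..} (\<lambda>t. f (x + t *\<^sub>R \<gamma>) - g (x + t *\<^sub>R \<gamma>))"
  using integrable_on_ray[of f r \<gamma> x] integrable_on_ray[of g r \<gamma> x] assms
  by (simp add: ray_transform_def integral_diff inner_commute[of w] inner_diff_left)

lemma C2c_continuous: "C2c U h \<Longrightarrow> continuous_on UNIV h"
  unfolding C2c_def C2_def
  by (meson continuous_at_imp_continuous_on has_derivative_continuous)

lemma C2c_eq_0_outside:
  assumes "C2c U h" "x \<notin> U"
  shows "h x = 0"
proof -
  have "x \<notin> closure {x. h x \<noteq> 0}"
    using assms unfolding C2c_def by auto
  then show ?thesis
    using closure_subset[of "{x. h x \<noteq> 0}"] by auto
qed

lemma C2c_ball_components:
  fixes f :: "real^2 \<Rightarrow> real^2"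
  assumes "C2c (ball 0 r) (\<lambda>x. f x $ 1)" "C2c (ball 0 r) (\<lambda>x. f x $ 2)"
  shows "continuous_on UNIV f" and "r \<le> norm x \<Longrightarrow> f x = 0"
proof -
  have "continuous_on UNIV (\<lambda>x. \<chi> i. f x $ i)"
  proof (rule continuous_on_vec_lambda)
    fix i :: 2
    show "continuous_on UNIV (\<lambda>x. f x $ i)"
      using exhaust_2[of i] C2c_continuous[OF assms(1)] C2c_continuous[OF assms(2)] by auto
  qed
  then show "continuous_on UNIV f"
    by simp
  show "f x = 0" if "r \<le> norm x"
    using that C2c_eq_0_outside[OF assms(1)] C2c_eq_0_outside[OF assms(2)]
    by (simp add: vec_eq_iff forall_2)
qed

lemma continuous_on_vector_pair: "continuous_on S (\<lambda>p. vector [fst p, snd p] :: real^2)"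
proof -
  have eq: "(\<lambda>p. vector [fst p, snd p] :: real^2) = (\<lambda>p. \<chi> i. if i = 1 then fst p else snd p)"
    by (auto simp: vec_eq_iff forall_2)
  have "continuous_on S (\<lambda>p. if i = 1 then fst p else snd p)" for i :: 2
    by (cases "i = 1") (simp_all add: continuous_on_fst continuous_on_snd continuous_on_id)
  then show ?thesis
    unfolding eq by (rule continuous_on_vec_lambda)
qed

lemma vanishes_off_square_vector_pair:
  fixes F :: "real^2 \<Rightarrow> 'a::zero"
  assumes "\<And>z. r \<le> norm z \<Longrightarrow> F z = 0"
  shows "vanishes_off_square r (\<lambda>p. F (vector [fst p, snd p]))"
proof -
  have "r \<le> norm (vector [s, y] :: real^2)" if "r \<le> \<bar>s\<bar> \<or> r \<le> \<bar>y\<bar>" for s y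
    using that component_le_norm_cart[of "vector [s, y] :: real^2" 1]
      component_le_norm_cart[of "vector [s, y] :: real^2" 2] by auto
  then show ?thesis
    using assms by (simp add: vanishes_off_square_def)
qed

lemma star_transform_diff_components:
  "star_transform m c gam f x $ 1 - star_transform m c gam g x $ 1 =
    (\<Sum>i<m. c i * (ray_transform (gam i) (\<lambda>y. f y \<bullet> gam i) x -
      ray_transform (gam i) (\<lambda>y. g y \<bullet> gam i) x))"
  "star_transform m c gam f x $ 2 - star_transform m c gam g x $ 2 =
    (\<Sum>i<m. c i * (ray_transform (gam i) (\<lambda>y. f y \<bullet> perp (gam i)) x -
      ray_transform (gam i) (\<lambda>y. g y \<bullet> perp (gam i)) x))"
  by (simp_all add: star_transform_def sum_component right_diff_distrib sum_subtractf)

lemma ray_sums_vanish_if_star_transforms_agree: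
  fixes f g :: "real^2 \<Rightarrow> real^2" and gam :: "nat \<Rightarrow> real^2"
  assumes H_eq: "\<And>p. H p = f (vector [fst p, snd p]) - g (vector [fst p, snd p])"
    and "continuous_on UNIV f" "continuous_on UNIV g"
    and "\<And>z. r \<le> norm z \<Longrightarrow> f z = 0" "\<And>z. r \<le> norm z \<Longrightarrow> g z = 0"
    and unit: "\<forall>i<m. norm (gam i) = 1" and star: "star_transform m c gam f = star_transform m c gam g"
  shows "(\<Sum>i<m. c i * (gam i \<bullet> integral {0..} (\<lambda>t. H (x + t * gam i $ 1, y + t * gam i $ 2)))) = 0"
    and "(\<Sum>i<m. c i *
      (perp (gam i) \<bullet> integral {0..} (\<lambda>t. H (x + t * gam i $ 1, y + t * gam i $ 2)))) = 0"
proof -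
  let ?p = "vector [x, y] :: real^2"
  have H: "H (x + t * gam i $ 1, y + t * gam i $ 2) = f (?p + t *\<^sub>R gam i) - g (?p + t *\<^sub>R gam i)"
    for i t
  proof -
    have "vector [x + t * gam i $ 1, y + t * gam i $ 2] = ?p + t *\<^sub>R gam i"
      by (simp add: vec_eq_iff forall_2)
    then show ?thesis
      by (simp add: H_eq)
  qed
  have diff: "ray_transform (gam i) (\<lambda>y. f y \<bullet> w) ?p - ray_transform (gam i) (\<lambda>y. g y \<bullet> w) ?p =
      w \<bullet> integral {0..} (\<lambda>t. H (x + t * gam i $ 1, y + t * gam i $ 2))" if "i \<in> {..<m}" for i w
    unfolding H using unit that by (simp add: ray_transform_inner_diff[OF assms(2-5)])
  have "(\<Sum>i<m. c i * (gam i \<bullet> integral {0..} (\<lambda>t. H (x + t * gam i $ 1, y + t * gam i $ 2)))) =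
      star_transform m c gam f ?p $ 1 - star_transform m c gam g ?p $ 1"
    unfolding star_transform_diff_components by (rule sum.cong[OF refl]) (simp add: diff)
  then show "(\<Sum>i<m. c i * (gam i \<bullet> integral {0..} (\<lambda>t. H (x + t * gam i $ 1, y + t * gam i $ 2)))) = 0"
    using star by simp
  have "(\<Sum>i<m. c i * (perp (gam i) \<bullet> integral {0..} (\<lambda>t. H (x + t * gam i $ 1, y + t * gam i $ 2)))) =
      star_transform m c gam f ?p $ 2 - star_transform m c gam g ?p $ 2"
    unfolding star_transform_diff_components by (rule sum.cong[OF refl]) (simp add: diff)
  then show "(\<Sum>i<m. c i *
      (perp (gam i) \<bullet> integral {0..} (\<lambda>t. H (x + t * gam i $ 1, y + t * gam i $ 2)))) = 0"
    using star by simp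
qed

theorem corollary3:
  fixes r :: real and m :: nat and gam :: "nat \<Rightarrow> real^2" and c :: "nat \<Rightarrow> real"
    and f g :: "real^2 \<Rightarrow> real^2"
  assumes "r > 0"
    and "odd m"
    and "inj_on gam {..<m}"
    and "\<forall>i<m. norm (gam i) = 1"
    and "\<forall>i<m. c i \<noteq> 0"
    and "C2c (ball 0 r) (\<lambda>x. f x $ 1)" and "C2c (ball 0 r) (\<lambda>x. f x $ 2)"
    and "C2c (ball 0 r) (\<lambda>x. g x $ 1)" and "C2c (ball 0 r) (\<lambda>x. g x $ 2)"
    and "star_transform m c gam f = star_transform m c gam g"
  shows "f = g"
proof -
  note f = C2c_ball_components[OF assms(6,7)] and g = C2c_ball_components[OF assms(8,9)]
  define H where "H p = f (vector [fst p, snd p]) - g (vector [fst p, snd p])" for p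
  have H: "continuous_on UNIV H" "vanishes_off_square r H"
    using continuous_on_compose2[OF continuous_on_diff[OF f(1) g(1)] continuous_on_vector_pair]
      vanishes_off_square_vector_pair[of r "\<lambda>z. f z - g z"] f(2) g(2)
    by (simp_all add: H_def[abs_def])
  note rays = ray_sums_vanish_if_star_transforms_agree[OF H_def f(1) g(1) f(2) g(2) assms(4,10)]
  have "line_transform r H u \<tau> = 0"
    if "u \<in> {u. (\<forall>i<m. gam i $ 2 - u * gam i $ 1 \<noteq> 0) \<and>
      weighted_directions m c gam u \<noteq> 0}" for u \<tau>
    using that by (intro line_transform_eq_0_if_ray_sums_vanish[OF H assms(1) _ _ rays]) auto
  then have "H (z $ 1, z $ 2) = 0" for z :: "real^2"
    by (rule eq_0_if_line_transforms_vanish[OF H assms(1) infinite_good_slopes[OF assms(3,4,5,2)]])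
  moreover have "vector [z $ 1, z $ 2] = z" for z :: "real^2"
    by (simp add: vec_eq_iff forall_2)
  ultimately show ?thesis
    by (auto simp: H_def)
qed

end
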